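(* For the complete graph $K_n$, let $V(n)$ denote the number of distinct vertices visited by the random basic walk on $K_n$ (from any fixed starting vertex and initial port). Then, as $n\to\infty$, the expected value of $V(n)$ is asymptotically at least $(1-1/e)\,n$; that is, $\liminf_{n\to\infty} \mathbb{E}[V(n)]/n \ge 1-1/e$.
   Context: Each undirected edge $\{v,w\}$ is regarded as two arcs $v\to w$ and $w\to v$. A labeling of $K_n$ assigns, at each vertex $v$, the port numbers $1,\dots,n-1$ bijectively to the $n-1$ arcs leaving $v$ (labels on $v\to w$ and $w\to v$ need not agree). In a random labeling these bijections are chosen uniformly at random, independently for different vertices. Given a labeling, a starting vertex $v_0$ and an initial port $\ell$, the basic walk leaves $v_0$ along the arc labeled $\ell$; thereafter, whenever it enters a vertex $v$ along an arc whose label is $i$, it leaves $v$ along the arc out of $v$ labeled $(i \bmod (n-1))+1$. The random basic walk is the basic walk for a random labeling. *)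

theory Defs
  imports Complex_Main "HOL-Library.Extended_Real"
begin

text \<open>Vertices of K_n are 0,...,n-1. A labeling lab assigns to the arc v -> w
  (v, w < n, v \<noteq> w) the port number lab v w at v; at each vertex v the map
  w \<mapsto> lab v w is a bijection from the other vertices onto {1..n-1}.
  Outside the arcs lab is fixed to 0, so the set of labelings is finite and is
  exactly the product of the per-vertex bijections.\<close>

definition labelings :: "nat \<Rightarrow> (nat \<Rightarrow> nat \<Rightarrow> nat) set" where
  "labelings n = {lab.
     (\<forall>v<n. bij_betw (lab v) ({..<n} - {v}) {1..n-1}) \<and>
     (\<forall>v w. (n \<le> v \<or> n \<le> w \<or> v = w) \<longrightarrow> lab v w = 0)}"

definition next_vertex :: "nat \<Rightarrow> (nat \<Rightarrow> nat \<Rightarrow> nat) \<Rightarrow> nat \<Rightarrow> nat \<Rightarrow> nat" where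
  "next_vertex n lab v i = (THE w. w < n \<and> w \<noteq> v \<and> lab v w = i)"

text \<open>State (v, j): the walk is at vertex v and will leave v along the arc labelled j.\<close>
primrec basic_walk :: "nat \<Rightarrow> (nat \<Rightarrow> nat \<Rightarrow> nat) \<Rightarrow> nat \<Rightarrow> nat \<Rightarrow> nat \<Rightarrow> nat \<times> nat" where
  "basic_walk n lab v0 l 0 = (v0, l)"
| "basic_walk n lab v0 l (Suc k) =
     (let (v, j) = basic_walk n lab v0 l k in (next_vertex n lab v j, (j mod (n - 1)) + 1))"

definition visited :: "nat \<Rightarrow> (nat \<Rightarrow> nat \<Rightarrow> nat) \<Rightarrow> nat \<Rightarrow> nat \<Rightarrow> nat set" where
  "visited n lab v0 l = {fst (basic_walk n lab v0 l k) | k. True}"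

definition expected_visited :: "nat \<Rightarrow> nat \<Rightarrow> nat \<Rightarrow> real" where
  "expected_visited n v0 l =
     (\<Sum>lab\<in>labelings n. real (card (visited n lab v0 l))) / real (card (labelings n))"

end

theory Submission imports Defs begin

text \<open>Fix a vertex w \<noteq> v0 and let A k be the set of labelings whose walk avoids w during
  its first k + 1 positions. For k \<le> n - 2 the map sending a labeling in A k to its
  redirection at step k (exchange, at the current vertex, the ports of the next vertex and
  of w) together with the next vertex is injective into (A k - A (k + 1)) \<times> [n]: the
  ports used at steps 0..k are pairwise distinct, so the earlier part of the walk is
  unchanged. Hence |A (k + 1)| \<le> (1 - 1/n) |A k|, so w is missed by the first n - 1 steps
  with probability at most (1 - 1/n)^(n-1), and the expected number of visited vertices
  is at least 1 + (n - 1)(1 - (1 - 1/n)^(n-1)) = n - n (1 - 1/n)^n \<ge> n (1 - 1/e).\<close>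

lemma one_plus_coverage_ge:
  assumes "1 \<le> n"
  shows "real n * (1 - exp (-1)) \<le> 1 + real (n - 1) * (1 - (1 - 1 / real n) ^ (n - 1))"
proof -
  let ?q = "1 - 1 / real n"
  have "real (n - 1) = real n * ?q"
    using assms by (simp add: field_simps of_nat_diff)
  moreover have "?q ^ n = ?q * ?q ^ (n - 1)"
    using assms by (simp flip: power_Suc)
  ultimately have "real (n - 1) * ?q ^ (n - 1) = real n * ?q ^ n"
    by (simp add: mult.assoc)
  moreover have "1 + real (n - 1) = real n"
    using assms by simp
  moreover have "real n * ?q ^ n \<le> real n * exp (-1)"
    using exp_ge_one_minus_x_over_n_power_n[of 1 n] assms by (intro mult_left_mono) auto
  ultimately show ?thesis
    unfolding right_diff_distrib mult_1_right by linarith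
qed

lemma labelings_bij_betw:
  "lab \<in> labelings n \<Longrightarrow> v < n \<Longrightarrow> bij_betw (lab v) ({..<n} - {v}) {1..n-1}"
  unfolding labelings_def by auto

lemma finite_labelings: "finite (labelings n)"
proof -
  define rows where
    "rows = {r :: nat \<Rightarrow> nat. \<forall>w. (w \<in> {..<n} \<longrightarrow> r w \<in> {..n}) \<and> (w \<notin> {..<n} \<longrightarrow> r w = 0)}"
  have "finite rows"
    unfolding rows_def by (rule finite_set_of_finite_funs) auto
  then have fin: "finite {lab. \<forall>v. (v \<in> {..<n} \<longrightarrow> lab v \<in> rows) \<and> (v \<notin> {..<n} \<longrightarrow> lab v = (\<lambda>_. 0))}"
    by (intro finite_set_of_finite_funs) auto
  have "lab v w \<le> n" if "lab \<in> labelings n" "v < n" "w < n" "w \<noteq> v" for lab v w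
    using bij_betw_apply[OF labelings_bij_betw[OF that(1,2)], of w] that(3,4) by auto
  then have "labelings n \<subseteq> {lab. \<forall>v. (v \<in> {..<n} \<longrightarrow> lab v \<in> rows) \<and> (v \<notin> {..<n} \<longrightarrow> lab v = (\<lambda>_. 0))}"
    unfolding rows_def by (auto simp: labelings_def fun_eq_iff) (metis le0 not_less)
  with fin show ?thesis
    by (rule finite_subset[rotated])
qed

lemma labelings_nonempty: "labelings n \<noteq> {}"
proof -
  let ?D = "\<lambda>v. {..<n} - {v}"
  have "\<exists>h. bij_betw h (?D v) {1..n-1}" if "v < n" for v
    using that by (intro finite_same_card_bij) auto
  from someI_ex[OF this]
  have h: "bij_betw (SOME h. bij_betw h (?D v) {1..n-1}) (?D v) {1..n-1}" if "v < n" for v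
    using that .
  define lab where "lab v w =
      (if v < n \<and> w < n \<and> v \<noteq> w then (SOME h. bij_betw h (?D v) {1..n-1}) w else 0)" for v w
  have "bij_betw (lab v) (?D v) {1..n-1}" if "v < n" for v
    using h[OF that] by (rule bij_betw_cong[THEN iffD1, rotated]) (simp add: lab_def that)
  moreover have "lab v w = 0" if "n \<le> v \<or> n \<le> w \<or> v = w" for v w
    using that by (auto simp: lab_def)
  ultimately have "lab \<in> labelings n"
    unfolding labelings_def by blast
  then show ?thesis
    by blast
qed

lemma next_vertex_eqI:
  assumes "lab \<in> labelings n" "v < n" "x < n" "x \<noteq> v" "lab v x = j"
  shows "next_vertex n lab v j = x"
  unfolding next_vertex_def
proof (rule the_equality)
  show "x < n \<and> x \<noteq> v \<and> lab v x = j"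
    using assms(3-5) by blast
  have inj: "inj_on (lab v) ({..<n} - {v})"
    using bij_betw_imp_inj_on[OF labelings_bij_betw[OF assms(1,2)]] .
  fix y assume "y < n \<and> y \<noteq> v \<and> lab v y = j"
  with inj_onD[OF inj, of y x] assms(3-5) show "y = x"
    by simp
qed

lemma next_vertex_spec:
  assumes "lab \<in> labelings n" "v < n" "1 \<le> j" "j \<le> n - 1"
  shows "next_vertex n lab v j < n \<and> next_vertex n lab v j \<noteq> v \<and> lab v (next_vertex n lab v j) = j"
proof -
  have "j \<in> lab v ` ({..<n} - {v})"
    using bij_betw_imp_surj_on[OF labelings_bij_betw[OF assms(1,2)]] assms(3,4) by simp
  then obtain x where "x < n" "x \<noteq> v" "lab v x = j"
    by blast
  with next_vertex_eqI[OF assms(1,2) this] show ?thesis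
    by simp
qed

lemma next_vertex_cong: "lab v = lab' v \<Longrightarrow> next_vertex n lab v j = next_vertex n lab' v j"
  unfolding next_vertex_def by simp

definition swap_ports :: "(nat \<Rightarrow> nat \<Rightarrow> nat) \<Rightarrow> nat \<Rightarrow> nat \<Rightarrow> nat \<Rightarrow> nat \<Rightarrow> nat \<Rightarrow> nat" where
  "swap_ports lab u a b = lab(u := (lab u)(a := lab u b, b := lab u a))"

lemma swap_ports_swap_ports [simp]: "swap_ports (swap_ports lab u a b) u a b = lab"
  unfolding swap_ports_def by (auto simp: fun_eq_iff)

lemma swap_ports_in_labelings:
  assumes "lab \<in> labelings n" "u < n" "a < n" "a \<noteq> u" "b < n" "b \<noteq> u"
  shows "swap_ports lab u a b \<in> labelings n"
proof -
  let ?D = "{..<n} - {u}" and ?\<tau> = "\<lambda>x. if x = a then b else if x = b then a else x"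
  have "bij_betw ?\<tau> ?D ?D"
    using assms(3-6) by (intro bij_betw_byWitness[where f' = ?\<tau>]) auto
  from bij_betw_trans[OF this labelings_bij_betw[OF assms(1,2)]]
  have "bij_betw ((lab u)(a := lab u b, b := lab u a)) ?D {1..n-1}"
    by (rule bij_betw_cong[THEN iffD1, rotated]) auto
  with assms show ?thesis
    unfolding labelings_def swap_ports_def by auto
qed

lemma basic_walk_Suc':
  "basic_walk n lab v0 l (Suc k) =
    (next_vertex n lab (fst (basic_walk n lab v0 l k)) (snd (basic_walk n lab v0 l k)),
     snd (basic_walk n lab v0 l k) mod (n - 1) + 1)"
  by (simp add: split_def Let_def)

declare basic_walk.simps(2) [simp del]

lemma basic_walk_cong:
  assumes "\<And>i. i < k \<Longrightarrow>
      next_vertex n lab' (fst (basic_walk n lab v0 l i)) (snd (basic_walk n lab v0 l i)) =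
      next_vertex n lab (fst (basic_walk n lab v0 l i)) (snd (basic_walk n lab v0 l i))"
  shows "i \<le> k \<Longrightarrow> basic_walk n lab' v0 l i = basic_walk n lab v0 l i"
proof (induction i)
  case (Suc i)
  then show ?case
    using assms[of i] by (simp only: basic_walk_Suc')
qed simp

lemma start_in_visited: "v0 \<in> visited n lab v0 l"
  unfolding visited_def by (auto intro!: exI[of _ 0])

locale walk_params =
  fixes n v0 l :: nat
  assumes n2: "2 \<le> n" and v0: "v0 < n" and l1: "1 \<le> l" and l2: "l \<le> n - 1"
begin

lemma port_basic_walk: "snd (basic_walk n lab v0 l i) = (l - 1 + i) mod (n - 1) + 1"
proof (induction i)
  case 0
  then show ?case
    using l1 l2 n2 by simp
next
  case (Suc i)
  then show ?case
    by (simp only: basic_walk_Suc') (simp add: mod_Suc_eq)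
qed

lemma port_bounds: "1 \<le> snd (basic_walk n lab v0 l i) \<and> snd (basic_walk n lab v0 l i) \<le> n - 1"
proof -
  have "(l - 1 + i) mod (n - 1) < n - 1"
    using n2 by simp
  then show ?thesis
    by (simp add: port_basic_walk)
qed

lemma ports_distinct:
  assumes "i < k" "k < n - 1"
  shows "snd (basic_walk n lab v0 l i) \<noteq> snd (basic_walk n lab v0 l k)"
proof
  assume "snd (basic_walk n lab v0 l i) = snd (basic_walk n lab v0 l k)"
  then have "(l - 1 + i) mod (n - 1) = (l - 1 + k) mod (n - 1)"
    by (simp add: port_basic_walk)
  then have "(n - 1) dvd ((l - 1 + k) - (l - 1 + i))"
    using assms by (subst mod_eq_dvd_iff_nat[symmetric]) auto
  then have "(n - 1) dvd (k - i)"
    by simp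
  then show False
    using assms by (auto dest: dvd_imp_le)
qed

lemma basic_walk_lt: "lab \<in> labelings n \<Longrightarrow> fst (basic_walk n lab v0 l i) < n"
proof (induction i)
  case (Suc i)
  then show ?case
    using next_vertex_spec[OF Suc.prems Suc.IH] port_bounds by (simp only: basic_walk_Suc' fst_conv)
qed (use v0 in simp)

lemma visited_subset: "lab \<in> labelings n \<Longrightarrow> visited n lab v0 l \<subseteq> {..<n}"
  using basic_walk_lt unfolding visited_def by auto

lemma next_vertex_basic_walk:
  assumes "lab \<in> labelings n"
  shows "fst (basic_walk n lab v0 l (Suc i)) < n
    \<and> fst (basic_walk n lab v0 l (Suc i)) \<noteq> fst (basic_walk n lab v0 l i)
    \<and> lab (fst (basic_walk n lab v0 l i)) (fst (basic_walk n lab v0 l (Suc i)))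
        = snd (basic_walk n lab v0 l i)"
proof -
  have "1 \<le> snd (basic_walk n lab v0 l i)" "snd (basic_walk n lab v0 l i) \<le> n - 1"
    using port_bounds by auto
  from next_vertex_spec[OF assms basic_walk_lt[OF assms, of i] this] show ?thesis
    unfolding basic_walk_Suc' fst_conv .
qed

end

definition avoiding :: "nat \<Rightarrow> nat \<Rightarrow> nat \<Rightarrow> nat \<Rightarrow> nat \<Rightarrow> (nat \<Rightarrow> nat \<Rightarrow> nat) set" where
  "avoiding n v0 l w k = {lab \<in> labelings n. \<forall>i\<le>k. fst (basic_walk n lab v0 l i) \<noteq> w}"

definition redirect :: "nat \<Rightarrow> (nat \<Rightarrow> nat \<Rightarrow> nat) \<Rightarrow> nat \<Rightarrow> nat \<Rightarrow> nat \<Rightarrow> nat \<Rightarrow> nat \<Rightarrow> nat \<Rightarrow> nat" where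
  "redirect n lab v0 l w k =
     swap_ports lab (fst (basic_walk n lab v0 l k)) (fst (basic_walk n lab v0 l (Suc k))) w"

context walk_params
begin

context
  fixes lab :: "nat \<Rightarrow> nat \<Rightarrow> nat" and w k :: nat
  assumes avoid: "lab \<in> avoiding n v0 l w k" and w: "w < n" and k: "Suc k < n"
begin

lemma redirect_in_labelings: "redirect n lab v0 l w k \<in> labelings n"
proof -
  have L: "lab \<in> labelings n" and "fst (basic_walk n lab v0 l k) \<noteq> w"
    using avoid by (auto simp: avoiding_def)
  with w basic_walk_lt[OF L] next_vertex_basic_walk[OF L, of k] show ?thesis
    unfolding redirect_def by (intro swap_ports_in_labelings) auto
qed

text \<open>Before step k the walk leaves its current vertex through a port different from the
  one used at step k, and not towards w, so the swap is invisible to it.\<close>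
lemma basic_walk_redirect: "i \<le> k \<Longrightarrow> basic_walk n (redirect n lab v0 l w k) v0 l i = basic_walk n lab v0 l i"
proof (rule basic_walk_cong)
  fix i assume i: "i < k"
  have L: "lab \<in> labelings n" and avoids: "\<forall>i\<le>k. fst (basic_walk n lab v0 l i) \<noteq> w"
    using avoid by (auto simp: avoiding_def)
  let ?u = "fst (basic_walk n lab v0 l k)" and ?t = "fst (basic_walk n lab v0 l (Suc k))"
  let ?v = "fst (basic_walk n lab v0 l i)" and ?x = "fst (basic_walk n lab v0 l (Suc i))"
  let ?j = "snd (basic_walk n lab v0 l i)"
  have x: "?x < n" "?x \<noteq> ?v" "lab ?v ?x = ?j"
    using next_vertex_basic_walk[OF L, of i] by blast+
  have x_next: "next_vertex n lab ?v ?j = ?x"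
    by (simp add: basic_walk_Suc')
  show "next_vertex n (redirect n lab v0 l w k) ?v ?j = next_vertex n lab ?v ?j"
  proof (cases "?v = ?u")
    case True
    have "?j \<noteq> snd (basic_walk n lab v0 l k)"
      using ports_distinct[OF i] k by simp
    then have "?x \<noteq> ?t"
      using True x(3) next_vertex_basic_walk[OF L, of k] by metis
    moreover have "?x \<noteq> w"
      using avoids i by (simp add: Suc_leI)
    ultimately have "redirect n lab v0 l w k ?v ?x = ?j"
      using x True by (simp add: redirect_def swap_ports_def)
    then show ?thesis
      using next_vertex_eqI[OF redirect_in_labelings basic_walk_lt[OF L] x(1,2)] x_next by simp
  qed (intro next_vertex_cong, simp add: redirect_def swap_ports_def)
qed

lemma redirect_hits: "fst (basic_walk n (redirect n lab v0 l w k) v0 l (Suc k)) = w"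
proof -
  have L: "lab \<in> labelings n" and uw: "fst (basic_walk n lab v0 l k) \<noteq> w"
    using avoid by (auto simp: avoiding_def)
  let ?u = "fst (basic_walk n lab v0 l k)" and ?j = "snd (basic_walk n lab v0 l k)"
  have "redirect n lab v0 l w k ?u w = ?j"
    using next_vertex_basic_walk[OF L, of k] by (simp add: redirect_def swap_ports_def)
  then have "next_vertex n (redirect n lab v0 l w k) ?u ?j = w"
    using next_vertex_eqI[OF redirect_in_labelings basic_walk_lt[OF L] w uw[symmetric]] by simp
  moreover have "basic_walk n (redirect n lab v0 l w k) v0 l k = basic_walk n lab v0 l k"
    by (rule basic_walk_redirect) simp
  ultimately show ?thesis
    by (simp add: basic_walk_Suc')
qed

lemma redirect_in_avoiding_diff: "redirect n lab v0 l w k \<in> avoiding n v0 l w k - avoiding n v0 l w (Suc k)"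
  using redirect_in_labelings redirect_hits basic_walk_redirect avoid by (auto simp: avoiding_def)

end

lemma card_avoiding_le:
  assumes "w < n" "Suc k < n"
  shows "card (avoiding n v0 l w k) \<le> n * card (avoiding n v0 l w k - avoiding n v0 l w (Suc k))"
proof -
  let ?A = "avoiding n v0 l w k" and ?B = "avoiding n v0 l w (Suc k)"
  define g where "g lab = (redirect n lab v0 l w k, fst (basic_walk n lab v0 l (Suc k)))" for lab
  have "inj_on g ?A"
  proof
    fix a b assume a: "a \<in> ?A" and b: "b \<in> ?A" and "g a = g b"
    then have same: "redirect n a v0 l w k = redirect n b v0 l w k"
      and "fst (basic_walk n a v0 l (Suc k)) = fst (basic_walk n b v0 l (Suc k))"
      by (auto simp: g_def)
    moreover have "fst (basic_walk n a v0 l k) = fst (basic_walk n b v0 l k)"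
      using basic_walk_redirect[OF a assms, of k] basic_walk_redirect[OF b assms, of k] same by simp
    ultimately show "a = b"
      by (metis redirect_def swap_ports_swap_ports)
  qed
  moreover have "g ` ?A \<subseteq> (?A - ?B) \<times> {..<n}"
  proof
    fix y assume "y \<in> g ` ?A"
    then obtain lab where lab: "lab \<in> ?A" and y: "y = g lab"
      by blast
    have "fst (basic_walk n lab v0 l (Suc k)) < n"
      using lab basic_walk_lt by (simp add: avoiding_def)
    with redirect_in_avoiding_diff[OF lab assms] show "y \<in> (?A - ?B) \<times> {..<n}"
      by (simp add: y g_def)
  qed
  moreover have "finite ((?A - ?B) \<times> {..<n})"
    using finite_labelings by (auto simp: avoiding_def)
  ultimately have "card ?A \<le> card ((?A - ?B) \<times> {..<n})"
    by (metis card_image card_mono)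
  then show ?thesis
    by (simp add: card_cartesian_product mult.commute)
qed

lemma card_avoiding_decay:
  assumes w: "w < n" "w \<noteq> v0"
  shows "k \<le> n - 1 \<Longrightarrow> real (card (avoiding n v0 l w k)) \<le> (1 - 1 / real n) ^ k * real (card (labelings n))"
proof (induction k)
  case 0
  have "avoiding n v0 l w 0 = labelings n"
    using w by (auto simp: avoiding_def)
  then show ?case
    by simp
next
  case (Suc k)
  let ?A = "avoiding n v0 l w k" and ?B = "avoiding n v0 l w (Suc k)"
  have sub: "?B \<subseteq> ?A"
    unfolding avoiding_def using le_SucI by blast
  have fin: "finite ?A"
    using finite_labelings by (auto simp: avoiding_def)
  have "Suc k < n"
    using Suc.prems n2 by linarith
  from card_avoiding_le[OF w(1) this]
  have "card ?A \<le> n * (card ?A - card ?B)"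
    by (simp only: card_Diff_subset[OF finite_subset[OF sub fin] sub])
  then have "real (card ?A) \<le> real n * (real (card ?A) - real (card ?B))"
    using card_mono[OF fin sub] by (metis of_nat_diff of_nat_le_iff of_nat_mult)
  then have "real (card ?B) \<le> (1 - 1 / real n) * real (card ?A)"
    using n2 by (simp add: field_simps)
  also have "\<dots> \<le> (1 - 1 / real n) * ((1 - 1 / real n) ^ k * real (card (labelings n)))"
    using Suc n2 by (intro mult_left_mono) auto
  finally show ?case
    by simp
qed

lemma card_unvisited_le:
  assumes "w < n" "w \<noteq> v0"
  shows "real (card {lab \<in> labelings n. w \<notin> visited n lab v0 l})
    \<le> (1 - 1 / real n) ^ (n - 1) * real (card (labelings n))"
proof -
  have "{lab \<in> labelings n. w \<notin> visited n lab v0 l} \<subseteq> avoiding n v0 l w (n - 1)"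
    unfolding avoiding_def visited_def by blast
  then have "card {lab \<in> labelings n. w \<notin> visited n lab v0 l} \<le> card (avoiding n v0 l w (n - 1))"
    using finite_labelings by (intro card_mono) (auto simp: avoiding_def)
  with card_avoiding_decay[OF assms order_refl] show ?thesis
    by linarith
qed

lemma sum_card_visited:
  "(\<Sum>lab\<in>labelings n. card (visited n lab v0 l)) = (\<Sum>w<n. card {lab \<in> labelings n. w \<in> visited n lab v0 l})"
proof -
  have "(\<Sum>lab\<in>labelings n. card (visited n lab v0 l))
      = (\<Sum>lab\<in>labelings n. \<Sum>w<n. of_bool (w \<in> visited n lab v0 l))"
    using visited_subset by (intro sum.cong) (auto simp: Int_absorb1 Int_def[symmetric])
  also have "\<dots> = (\<Sum>w<n. card {lab \<in> labelings n. w \<in> visited n lab v0 l})"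
    using finite_labelings by (subst sum.swap) (simp add: Int_def)
  finally show ?thesis .
qed

lemma expected_visited_ge: "expected_visited n v0 l \<ge> real n * (1 - exp (-1))"
proof -
  let ?L = "labelings n" and ?c = "real (card (labelings n))" and ?q = "1 - 1 / real n"
  let ?V = "\<lambda>w. real (card {lab \<in> ?L. w \<in> visited n lab v0 l})"
  have c: "?c > 0"
    using finite_labelings labelings_nonempty by (simp add: card_gt_0_iff)
  have V_start: "?V v0 = ?c"
    by (simp add: start_in_visited)
  have V_other: "(1 - ?q ^ (n - 1)) * ?c \<le> ?V w" if "w \<in> {..<n} - {v0}" for w
  proof -
    have "card ?L = card {lab \<in> ?L. w \<in> visited n lab v0 l} + card {lab \<in> ?L. w \<notin> visited n lab v0 l}"
      using finite_labelings by (subst card_Un_disjoint[symmetric]) (auto intro: arg_cong[where f = card])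
    with card_unvisited_le that show ?thesis
      by (simp add: algebra_simps)
  qed
  have "?c * (real n * (1 - exp (-1))) \<le> ?c * (1 + real (n - 1) * (1 - ?q ^ (n - 1)))"
    using one_plus_coverage_ge n2 c by (intro mult_left_mono) auto
  also have "\<dots> = ?V v0 + (\<Sum>w\<in>{..<n} - {v0}. (1 - ?q ^ (n - 1)) * ?c)"
    using v0 V_start by (simp add: card_Diff_singleton algebra_simps)
  also have "\<dots> \<le> ?V v0 + (\<Sum>w\<in>{..<n} - {v0}. ?V w)"
    using V_other by (intro add_left_mono sum_mono) auto
  also have "\<dots> = (\<Sum>w<n. ?V w)"
    using v0 by (simp add: sum.remove)
  also have "\<dots> = (\<Sum>lab\<in>?L. real (card (visited n lab v0 l)))"
    unfolding of_nat_sum[symmetric] sum_card_visited ..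
  finally show ?thesis
    unfolding expected_visited_def using c by (simp add: pos_le_divide_eq mult.commute)
qed

end

theorem theorem5p1:
  fixes s p :: "nat \<Rightarrow> nat"
  assumes "\<And>n. 2 \<le> n \<Longrightarrow> s n < n"
    and "\<And>n. 2 \<le> n \<Longrightarrow> 1 \<le> p n \<and> p n \<le> n - 1"
  shows "liminf (\<lambda>n. ereal (expected_visited n (s n) (p n) / real n)) \<ge> ereal (1 - exp (-1))"
proof (rule Liminf_bounded)
  show "\<forall>\<^sub>F n in sequentially. ereal (1 - exp (- 1)) \<le> ereal (expected_visited n (s n) (p n) / real n)"
    unfolding eventually_sequentially
  proof (intro exI allI impI)
    fix n :: nat assume n: "2 \<le> n"
    interpret walk_params n "s n" "p n"
      using n assms by unfold_locales auto
    have "real n * (1 - exp (-1)) \<le> expected_visited n (s n) (p n)"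
      by (rule expected_visited_ge)
    then show "ereal (1 - exp (- 1)) \<le> ereal (expected_visited n (s n) (p n) / real n)"
      using n by (simp add: field_simps)
  qed
qed

end
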